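(* Let $a>0$ and $x_0=\frac{a}{a+1}$. For every $x\in[0,1]$ the series $$1-\sum_{n\ge1}(an)_{n-1}\frac{\bigl(x^a(1-x)\bigr)^n}{n!}$$ converges absolutely, and its value equals $g_a(x)$. Consequently this series equals $f_a(x)$ for $0\le x\le x_0$ and equals $x$ for $x_0\le x\le1$.
   Context: For $c$ real and integer $n$, $(c)_n=\Gamma(c+n)/\Gamma(c)$ is the Pochhammer symbol; in particular $(an)_{n-1}=\Gamma(an+n-1)/\Gamma(an)$ for $n\ge1$. For $a>0$ let $\phi_a(x)=x^a-x^{a+1}$ on $[0,1]$; it is strictly increasing on $[0,x_0]$ and strictly decreasing on $[x_0,1]$ with $x_0=a/(a+1)$. Let $l_a,r_a$ be the restrictions of $\phi_a$ to $[0,x_0]$ and $[x_0,1]$. Define $f_a(x)=r_a^{-1}(\phi_a(x))$ for $0\le x\le x_0$, $f_a(x)=l_a^{-1}(\phi_a(x))$ for $x_0\le x\le 1$ (the unique involution with $\phi_a\circ f_a=\phi_a$, $f_a\ne\mathrm{id}$ off $x_0$), and $g_a(x)=r_a^{-1}(\phi_a(x))$ for $0\le x\le1$. *)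

theory Defs
  imports "HOL-Analysis.Analysis"
begin

definition poch :: "real \<Rightarrow> nat \<Rightarrow> real" where
  "poch c n = Gamma (c + real n) / Gamma c"

definition phi :: "real \<Rightarrow> real \<Rightarrow> real" where
  "phi a x = x powr a - x powr (a + 1)"

definition xzero :: "real \<Rightarrow> real" where
  "xzero a = a / (a + 1)"

definition linv :: "real \<Rightarrow> real \<Rightarrow> real" where
  "linv a y = (THE t. t \<in> {0..xzero a} \<and> phi a t = y)"

definition rinv :: "real \<Rightarrow> real \<Rightarrow> real" where
  "rinv a y = (THE t. t \<in> {xzero a..1} \<and> phi a t = y)"

definition f_fun :: "real \<Rightarrow> real \<Rightarrow> real" where
  "f_fun a x = (if x \<le> xzero a then rinv a (phi a x) else linv a (phi a x))"

definition g_fun :: "real \<Rightarrow> real \<Rightarrow> real" where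
  "g_fun a x = rinv a (phi a x)"

definition term_a :: "real \<Rightarrow> real \<Rightarrow> nat \<Rightarrow> real" where
  "term_a a x n = poch (a * real n) (n - 1) * ((x powr a * (1 - x)) ^ n) / fact n"

end

theory Submission
  imports Defs "HOL-Real_Asymp.Real_Asymp"
begin

text \<open>
  The coefficients \<open>c\<^sub>n = (a n)\<^sub>n\<^sub>-\<^sub>1 / n!\<close> are values \<open>-A\<^sub>n(-1, a + 1)\<close> of Rothe
  polynomials, so the Hagen--Rothe convolution identity gives a quadratic recurrence for them. It
  says that \<open>S(y) = \<Sum> c\<^sub>n y\<^sup>n\<close> satisfies \<open>y S' (1 - (1 + a) S) = S (1 - S)\<close>. Log-convexity of
  \<open>\<Gamma>\<close> bounds \<open>c\<^sub>n\<^sub>+\<^sub>1 / c\<^sub>n\<close> and shows that the series converges for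
  \<open>|y| < \<phi>\<^sub>a(x\<^sub>0)\<close>, the maximum of \<open>\<phi>\<^sub>a\<close>. By the differential equation
  \<open>ln (S / y) + a ln (1 - S)\<close> is constant, hence \<open>S (1 - S)\<^sup>a = y\<close>, i.e.
  \<open>\<phi>\<^sub>a(1 - S(y)) = y\<close>, as long as \<open>S < 1\<close>. By continuity \<open>1 - S(y)\<close> never drops below
  \<open>x\<^sub>0\<close>, so \<open>1 - S(\<phi>\<^sub>a(x)) = r\<^sub>a\<^sup>-\<^sup>1(\<phi>\<^sub>a(x)) = g\<^sub>a(x)\<close>; at the endpoint
  \<open>y = \<phi>\<^sub>a(x\<^sub>0)\<close> the series still converges and everything extends by uniform convergence.
\<close>

section \<open>Rothe polynomials and the Hagen--Rothe identity\<close>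

(* A_n(x, z) = x / (x + n z) * binomial (x + n z) n, written without the removable singularity. *)
definition rothe :: "real \<Rightarrow> nat \<Rightarrow> real \<Rightarrow> real" where
  "rothe z n x = (if n = 0 then 1 else x / fact n * (\<Prod>j<n - 1. x + real n * z - 1 - real j))"

lemma rothe_0 [simp]: "rothe z 0 x = 1"
  by (simp add: rothe_def)

lemma rothe_Suc: "rothe z (Suc n) x = x / fact (Suc n) * (\<Prod>j<n. x + real (Suc n) * z - 1 - real j)"
  by (simp add: rothe_def)

lemma rothe_at_0: "n > 0 \<Longrightarrow> rothe z n 0 = 0"
  by (simp add: rothe_def)

lemma rothe_Suc_diff: "rothe z (Suc n) x - rothe z (Suc n) (x - 1) = rothe z n (x + z - 1)"
proof (cases n)
  case 0
  then show ?thesis by (simp add: rothe_def)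
next
  case (Suc m)
  define u where "u = x + real (Suc (Suc m)) * z"
  define Q where "Q = (\<Prod>j<m. u - 2 - real j)"
  define N where "N = real (Suc (Suc m))"
  have prod_x: "(\<Prod>j<Suc m. x + N * z - 1 - real j) = (u - 1) * Q"
    unfolding Q_def u_def N_def prod.lessThan_Suc_shift by (simp add: algebra_simps)
  have prod_x_1: "(\<Prod>j<Suc m. (x - 1) + N * z - 1 - real j) = Q * (u - 2 - real m)"
    unfolding Q_def u_def N_def prod.lessThan_Suc by (simp add: algebra_simps)
  have prod_shift: "(\<Prod>j<m. (x + z - 1) + real (Suc m) * z - 1 - real j) = Q"
    unfolding Q_def u_def by (intro prod.cong) (auto simp: algebra_simps)
  define F :: real where "F = fact (Suc m)"
  have F: "F > 0" "fact (Suc (Suc m)) = N * F" and N: "N > 0"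
    unfolding F_def N_def by simp_all
  have numerator: "x * ((u - 1) * Q) - (x - 1) * (Q * (u - 2 - real m)) = N * ((x + z - 1) * Q)"
    unfolding u_def N_def by (simp add: algebra_simps)
  have "x / (N * F) * ((u - 1) * Q) - (x - 1) / (N * F) * (Q * (u - 2 - real m))
      = (x * ((u - 1) * Q) - (x - 1) * (Q * (u - 2 - real m))) / (N * F)"
    by (simp only: times_divide_eq_left diff_divide_distrib[symmetric])
  also have "\<dots> = (x + z - 1) / F * Q"
    unfolding numerator using N by simp
  finally have "x / fact (Suc (Suc m)) * ((u - 1) * Q)
      - (x - 1) / fact (Suc (Suc m)) * (Q * (u - 2 - real m)) = (x + z - 1) / fact (Suc m) * Q"
    unfolding F(2) F_def .
  then show ?thesis
    unfolding Suc rothe_Suc N_def[symmetric] prod_x prod_x_1 prod_shift .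
qed

(* For fixed x the difference of the two sides is a polynomial in y which, by the induction
   hypothesis and rothe_Suc_diff, is 1-periodic; it vanishes at y = 0, hence everywhere. *)
theorem rothe_convolution: "(\<Sum>k\<le>n. rothe z k x * rothe z (n - k) y) = rothe z n (x + y)"
proof (induction n arbitrary: x y)
  case 0
  show ?case by simp
next
  case (Suc n)
  define D where "D w = (\<Sum>k\<le>Suc n. rothe z k x * rothe z (Suc n - k) w) - rothe z (Suc n) (x + w)" for w
  have periodic: "D w = D (w - 1)" for w
  proof -
    have "(\<Sum>k\<le>Suc n. rothe z k x * rothe z (Suc n - k) w)
          - (\<Sum>k\<le>Suc n. rothe z k x * rothe z (Suc n - k) (w - 1))
        = (\<Sum>k\<le>n. rothe z k x * (rothe z (Suc n - k) w - rothe z (Suc n - k) (w - 1)))"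
      by (simp add: sum_subtractf right_diff_distrib sum.atMost_Suc)
    also have "\<dots> = (\<Sum>k\<le>n. rothe z k x * rothe z (n - k) (w + z - 1))"
      by (intro sum.cong refl) (simp add: Suc_diff_le rothe_Suc_diff)
    also have "\<dots> = rothe z (Suc n) (x + w) - rothe z (Suc n) (x + w - 1)"
      using Suc.IH rothe_Suc_diff[of z n "x + w"] by (simp add: algebra_simps)
    finally show ?thesis
      unfolding D_def by (simp add: algebra_simps)
  qed
  have "D 0 = 0"
    unfolding D_def by (simp add: sum.atMost_Suc rothe_at_0)
  then have D_neg_nat: "D (- real m) = 0" for m
  proof (induction m)
    case (Suc m)
    have "- real (Suc m) = - real m - 1"
      by simp
    then show ?case
      using periodic[of "- real m"] Suc by metis
  qed simp
  define rothe_poly where "rothe_poly k =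
      (if k = 0 then 1 else smult (1 / fact k) ([:0, 1:] * (\<Prod>j<k - 1. [:real k * z - 1 - real j, 1:])))"
    for k
  have poly_rothe_poly: "poly (rothe_poly k) w = rothe z k w" for k w
    by (auto simp: rothe_poly_def rothe_def poly_prod algebra_simps intro!: prod.cong)
  define p where "p = (\<Sum>k\<le>Suc n. smult (rothe z k x) (rothe_poly (Suc n - k)))
      - pcompose (rothe_poly (Suc n)) [:x, 1:]"
  have poly_p: "poly p w = D w" for w
    by (simp add: p_def D_def poly_sum poly_pcompose poly_rothe_poly algebra_simps)
  have "p = 0"
  proof (rule ccontr)
    assume "p \<noteq> 0"
    then have "finite {w. poly p w = 0}"
      by (rule poly_roots_finite)
    moreover have "range (\<lambda>m::nat. - real m) \<subseteq> {w. poly p w = 0}"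
      using poly_p D_neg_nat by auto
    moreover have "infinite (range (\<lambda>m::nat. - real m))"
      by (rule range_inj_infinite) (auto simp: inj_def)
    ultimately show False
      using finite_subset by blast
  qed
  then show ?case
    using poly_p[of y] by (simp add: D_def)
qed

section \<open>The coefficients\<close>

definition fuss_coeff :: "real \<Rightarrow> nat \<Rightarrow> real" where
  "fuss_coeff a n = (if n = 0 then 0 else poch (a * real n) (n - 1) / fact n)"

lemma fuss_coeff_0 [simp]: "fuss_coeff a 0 = 0"
  by (simp add: fuss_coeff_def)

lemma poch_eq_pochhammer: "c > 0 \<Longrightarrow> poch c k = pochhammer c k"
  by (simp add: poch_def pochhammer_Gamma nonpos_Ints_def)

lemma fuss_coeff_nonneg: "a > 0 \<Longrightarrow> fuss_coeff a n \<ge> 0"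
  by (cases "n = 0") (auto simp: fuss_coeff_def poch_eq_pochhammer pochhammer_nonneg)

lemma fuss_coeff_1:
  assumes "a > 0"
  shows "fuss_coeff a 1 = 1"
  using Gamma_real_pos[OF assms] by (simp add: fuss_coeff_def poch_def)

lemma fuss_coeff_eq_rothe:
  assumes "a > 0" and "n > 0"
  shows "fuss_coeff a n = - rothe (a + 1) n (-1)"
proof -
  obtain m where m: "n = Suc m"
    using assms(2) by (cases n) auto
  have "poch (a * real n) (n - 1) = (\<Prod>j<m. a * real n + real j)"
    using assms by (simp add: poch_eq_pochhammer pochhammer_prod atLeast0LessThan m)
  also have "\<dots> = (\<Prod>j<m. a * real n + real (m - Suc j))"
    by (rule prod.nat_diff_reindex[symmetric])
  also have "\<dots> = (\<Prod>j<m. - 1 + real n * (a + 1) - 1 - real j)"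
    using m by (intro prod.cong refl) (auto simp: of_nat_diff algebra_simps)
  finally show ?thesis
    using m by (simp add: fuss_coeff_def rothe_def)
qed

definition fuss_coeff_conv :: "real \<Rightarrow> nat \<Rightarrow> real" where
  "fuss_coeff_conv a n = (\<Sum>i\<le>n. fuss_coeff a i * fuss_coeff a (n - i))"

lemma fuss_coeff_conv_eq_rothe:
  assumes "a > 0" and "n > 0"
  shows "fuss_coeff_conv a n = 2 * fuss_coeff a n + rothe (a + 1) n (-2)"
proof -
  obtain m where m: "n = Suc m"
    using assms(2) by (cases n) auto
  define A where "A i = rothe (a + 1) i (-1)" for i
  have fuss_A: "i > 0 \<Longrightarrow> fuss_coeff a i = - A i" for i
    unfolding A_def using fuss_coeff_eq_rothe[OF assms(1)] by simp
  have split: "(\<Sum>i\<le>Suc m. g i) = g 0 + (\<Sum>i<m. g (Suc i)) + g (Suc m)" for g :: "nat \<Rightarrow> real"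
    by (simp add: sum.atMost_Suc flip: lessThan_Suc_atMost sum.lessThan_Suc_shift)
  have "fuss_coeff_conv a n = (\<Sum>i<m. fuss_coeff a (Suc i) * fuss_coeff a (Suc m - Suc i))"
    unfolding fuss_coeff_conv_def m split by simp
  also have "\<dots> = (\<Sum>i<m. A (Suc i) * A (Suc m - Suc i))"
    by (intro sum.cong refl) (auto simp: fuss_A)
  also have "\<dots> = (\<Sum>i\<le>n. A i * A (n - i)) - 2 * A n"
    unfolding m split by (simp add: A_def)
  also have "(\<Sum>i\<le>n. A i * A (n - i)) = rothe (a + 1) n (-2)"
    unfolding A_def using rothe_convolution[where z = "a + 1" and x = "-1" and y = "-1"] by simp
  finally show ?thesis
    using fuss_A[OF assms(2)] by simp
qed

(* Coefficientwise form of the differential equation fuss_series_ode below. *)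
lemma fuss_coeff_recurrence:
  assumes a: "a > 0"
  shows "(real n - 1) * fuss_coeff a n = ((1 + a) * real n / 2 - 1) * fuss_coeff_conv a n"
proof (cases "n \<ge> 2")
  case False
  then have "n = 0 \<or> n = 1"
    by auto
  then show ?thesis
    by (auto simp: fuss_coeff_conv_def fuss_coeff_1[OF a])
next
  case True
  then obtain m where m: "n = Suc (Suc m)"
    by (metis add_2_eq_Suc le_Suc_ex)
  then have n_pos: "n > 0"
    by simp
  define Q where "Q = (\<Prod>j<m. a * real n + real m - 1 - real j)"
  define K where "K = Q / fact n"
  have "(\<Prod>j<Suc m. - 1 + real n * (a + 1) - 1 - real j) = (a * real n + real m) * Q"
    unfolding Q_def prod.lessThan_Suc_shift using m by (simp add: algebra_simps)
  then have coeff: "fuss_coeff a n = (a * real n + real m) * K"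
    using fuss_coeff_eq_rothe[OF a, of n] m by (simp add: rothe_def K_def)
  have "(\<Prod>j<Suc m. - 2 + real n * (a + 1) - 1 - real j) = Q * (a * real n - 1)"
    unfolding Q_def prod.lessThan_Suc using m by (simp add: algebra_simps)
  then have rothe_2: "rothe (a + 1) n (-2) = - (2 * (a * real n - 1) * K)"
    using m by (simp add: rothe_def K_def)
  show ?thesis
    unfolding fuss_coeff_conv_eq_rothe[OF a n_pos] rothe_2 coeff
    using m by (simp add: field_simps)
qed

lemma sum_convolution_weighted:
  fixes f :: "nat \<Rightarrow> real"
  shows "(\<Sum>i\<le>n. real i * (f i * f (n - i))) = real n / 2 * (\<Sum>i\<le>n. f i * f (n - i))"
proof -
  have "(\<Sum>i\<le>n. real i * (f i * f (n - i))) = (\<Sum>i\<le>n. real (n - i) * (f (n - i) * f (n - (n - i))))"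
    using sum.nat_diff_reindex[where n = "Suc n" and g = "\<lambda>j. real j * (f j * f (n - j))"]
    by (simp add: lessThan_Suc_atMost)
  also have "\<dots> = (\<Sum>i\<le>n. (real n - real i) * (f i * f (n - i)))"
    by (intro sum.cong refl) (auto simp: of_nat_diff)
  finally have "2 * (\<Sum>i\<le>n. real i * (f i * f (n - i)))
      = (\<Sum>i\<le>n. real i * (f i * f (n - i)) + (real n - real i) * (f i * f (n - i)))"
    by (simp add: sum.distrib)
  also have "\<dots> = real n * (\<Sum>i\<le>n. f i * f (n - i))"
    by (simp add: sum_distrib_left algebra_simps)
  finally show ?thesis
    by simp
qed

lemma Gamma_ratio_eq_exp_ln:
  "x > 0 \<Longrightarrow> y > 0 \<Longrightarrow> Gamma y / Gamma x = exp (ln (Gamma y) - ln (Gamma x :: real))"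
  by (simp add: exp_diff)

lemma ln_Gamma_plus1_diff:
  assumes "v > 0"
  shows "ln (Gamma (v + 1)) - ln (Gamma v) = ln (v :: real)"
proof -
  have "Gamma (v + 1) = v * Gamma v"
    using assms by (intro Gamma_plus1) (auto simp: nonpos_Ints_def)
  then show ?thesis
    using ln_mult_pos[OF assms Gamma_real_pos[OF assms]] by simp
qed

lemma Gamma_ratio_le_powr:
  fixes x b :: real
  assumes x: "x > 0" and b: "b > 0"
  shows "Gamma (x + b) / Gamma x \<le> (x + b) powr b"
proof -
  let ?f = "\<lambda>v. ln (Gamma v :: real)"
  have convex: "convex_on {0<..} ?f"
    using log_convex_Gamma_real by (simp add: o_def)
  have "(?f x - ?f (x + b)) / (x - (x + b)) \<le> (?f (x + b) - ?f (x + b + 1)) / ((x + b) - (x + b + 1))"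
    using convex_on_slope_le[OF convex, of x "x + b + 1" "x + b"] x b by auto
  then have "?f (x + b) - ?f x \<le> b * ln (x + b)"
    using ln_Gamma_plus1_diff[of "x + b"] x b by (simp add: field_simps)
  then show ?thesis
    using x b by (simp add: Gamma_ratio_eq_exp_ln powr_def)
qed

lemma Gamma_ratio_ge_powr:
  fixes x b :: real
  assumes x: "x > 1" and b: "b > 0"
  shows "(x - 1) powr b \<le> Gamma (x + b) / Gamma x"
proof -
  let ?f = "\<lambda>v. ln (Gamma v :: real)"
  have convex: "convex_on {0<..} ?f"
    using log_convex_Gamma_real by (simp add: o_def)
  have "(?f (x - 1) - ?f x) / ((x - 1) - x) \<le> (?f x - ?f (x + b)) / (x - (x + b))"
    using convex_on_slope_le[OF convex, of "x - 1" "x + b" x] x b by auto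
  then have "b * ln (x - 1) \<le> ?f (x + b) - ?f x"
    using ln_Gamma_plus1_diff[of "x - 1"] x b by (simp add: field_simps)
  then show ?thesis
    using x b by (simp add: Gamma_ratio_eq_exp_ln powr_def)
qed

lemma fuss_coeff_Suc_le:
  assumes a: "a > 0" and n: "a * real n > 1"
  shows "fuss_coeff a (Suc n)
    \<le> fuss_coeff a n * ((a + 1) * ((a + 1) * (real n + 1) / (a * real n - 1)) powr a)"
proof -
  have n_pos: "n > 0"
    using n by (cases n) auto
  define B where "B = a * real n"
  define A where "A = B + real n - 1"
  have B: "B > 1" and A: "A > 0"
    using n n_pos by (auto simp: A_def B_def)
  have Gamma_pos: "Gamma A > 0" "Gamma B > 0" "Gamma (B + a) > 0"
    using A B a by simp_all
  define G1 where "G1 = Gamma (A + (a + 1)) / Gamma A"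
  define G2 where "G2 = Gamma (B + a) / Gamma B"
  have G1: "G1 \<le> (A + (a + 1)) powr (a + 1)"
    unfolding G1_def using Gamma_ratio_le_powr[OF A, of "a + 1"] a by simp
  have G2: "(B - 1) powr a \<le> G2"
    unfolding G2_def by (rule Gamma_ratio_ge_powr[OF B a])
  have coeff_n: "fuss_coeff a n = Gamma A / Gamma B / fact n"
    using n_pos by (simp add: fuss_coeff_def poch_def A_def B_def of_nat_diff add_diff_eq)
  have coeff_Suc_n:
    "fuss_coeff a (Suc n) = Gamma (A + (a + 1)) / Gamma (B + a) / (fact n * (real n + 1))"
    by (simp add: fuss_coeff_def poch_def A_def B_def algebra_simps)
  have ratio: "fuss_coeff a (Suc n) = fuss_coeff a n * (G1 / (G2 * (real n + 1)))"
    unfolding coeff_n coeff_Suc_n G1_def G2_def using Gamma_pos by (simp add: divide_simps)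
  have "G1 / (G2 * (real n + 1)) \<le> (A + (a + 1)) powr (a + 1) / ((B - 1) powr a * (real n + 1))"
    using G1 G2 B by (intro frac_le mult_right_mono) auto
  also have "\<dots> \<le> ((a + 1) * (real n + 1)) powr (a + 1) / ((B - 1) powr a * (real n + 1))"
    using A a B by (intro divide_right_mono powr_mono2) (auto simp: A_def B_def algebra_simps)
  also have "\<dots> = (a + 1) * ((a + 1) * (real n + 1) / (B - 1)) powr a"
    using a B by (simp add: powr_add powr_divide)
  finally show ?thesis
    unfolding ratio B_def using fuss_coeff_nonneg[OF a, of n] by (intro mult_left_mono) auto
qed

section \<open>The function phi and the radius of convergence\<close>

lemma phi_eq: "0 \<le> t \<Longrightarrow> phi a t = t powr a * (1 - t)"
  by (cases "t = 0") (auto simp: phi_def powr_add algebra_simps)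

lemma phi_nonneg: "0 \<le> t \<Longrightarrow> t \<le> 1 \<Longrightarrow> phi a t \<ge> 0"
  by (simp add: phi_eq)

lemma continuous_on_phi: "a > 0 \<Longrightarrow> continuous_on {0..1} (phi a)"
  unfolding phi_def by (intro continuous_intros continuous_on_powr') auto

lemma DERIV_phi: "t > 0 \<Longrightarrow> DERIV (phi a) t :> t powr (a - 1) * (a - (a + 1) * t)"
proof -
  assume t: "t > 0"
  have "DERIV (phi a) t :> a * t powr (a - 1) - (a + 1) * t powr (a + 1 - 1)"
    unfolding phi_def by (intro derivative_intros has_real_derivative_powr t)
  moreover have "t powr (a + 1 - 1) = t powr (a - 1) * t"
    using t powr_add[of t "a - 1" 1] by simp
  ultimately show ?thesis
    by (simp add: algebra_simps)
qed

lemma xzero_bounds: "a > 0 \<Longrightarrow> 0 < xzero a \<and> xzero a < 1"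
  by (simp add: xzero_def)

lemma phi_strict_antimono:
  assumes a: "a > 0" and st: "xzero a \<le> s" "s < t" "t \<le> 1"
  shows "phi a t < phi a s"
proof (rule DERIV_neg_imp_decreasing_open[OF st(2)])
  fix x assume x: "s < x" "x < t"
  have "a \<le> (a + 1) * s"
    using st a by (simp add: xzero_def field_simps)
  also have "\<dots> < (a + 1) * x"
    using x a by simp
  finally have "a < (a + 1) * x" .
  moreover have "x > 0"
    using x st xzero_bounds[OF a] by linarith
  ultimately show "\<exists>y. DERIV (phi a) x :> y \<and> y < 0"
    using DERIV_phi[of x a]
    by (intro exI[of _ "x powr (a - 1) * (a - (a + 1) * x)"] conjI) (auto simp: mult_pos_neg)
next
  show "continuous_on {s..t} (phi a)"
    using st xzero_bounds[OF a] by (intro continuous_on_subset[OF continuous_on_phi[OF a]]) auto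
qed

lemma phi_strict_mono:
  assumes a: "a > 0" and st: "0 \<le> s" "s < t" "t \<le> xzero a"
  shows "phi a s < phi a t"
proof (rule DERIV_pos_imp_increasing_open[OF st(2)])
  fix x assume x: "s < x" "x < t"
  have "(a + 1) * x < (a + 1) * t"
    using x a by simp
  also have "\<dots> \<le> a"
    using st a by (simp add: xzero_def field_simps)
  finally have "(a + 1) * x < a" .
  moreover have "x > 0"
    using x st by linarith
  ultimately show "\<exists>y. DERIV (phi a) x :> y \<and> y > 0"
    using DERIV_phi[of x a] by (intro exI[of _ "x powr (a - 1) * (a - (a + 1) * x)"] conjI) auto
next
  show "continuous_on {s..t} (phi a)"
    using st xzero_bounds[OF a] by (intro continuous_on_subset[OF continuous_on_phi[OF a]]) auto
qed

definition phi_max :: "real \<Rightarrow> real" where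
  "phi_max a = phi a (xzero a)"

lemma phi_le_phi_max:
  assumes a: "a > 0" and x: "0 \<le> x" "x \<le> 1"
  shows "phi a x \<le> phi_max a"
proof (cases x "xzero a" rule: linorder_cases)
  case less
  then show ?thesis
    using phi_strict_mono[OF a x(1) less order_refl] by (simp add: phi_max_def)
next
  case greater
  then show ?thesis
    using phi_strict_antimono[OF a order_refl greater x(2)] by (simp add: phi_max_def)
qed (simp add: phi_max_def)

lemma phi_max_eq: "a > 0 \<Longrightarrow> phi_max a = (a / (a + 1)) powr a / (a + 1)"
  by (simp add: phi_max_def xzero_def phi_eq field_simps)

lemma phi_max_pos: "a > 0 \<Longrightarrow> phi_max a > 0"
  by (simp add: phi_max_eq)

lemma rinv_eqI:
  assumes a: "a > 0" and t: "xzero a \<le> t" "t \<le> 1" and y: "phi a t = y"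
  shows "rinv a y = t"
  unfolding rinv_def
proof (rule the_equality)
  fix t' assume "t' \<in> {xzero a..1} \<and> phi a t' = y"
  then show "t' = t"
    using phi_strict_antimono[OF a] t y by (metis atLeastAtMost_iff less_irrefl linorder_neqE)
qed (use t y in auto)

lemma summable_fuss_series:
  assumes a: "a > 0" and K: "0 \<le> K" "K < phi_max a"
  shows "summable (\<lambda>n. fuss_coeff a n * K ^ n)"
proof -
  define \<theta> where "\<theta> n = (a + 1) * ((a + 1) * (real n + 1) / (a * real n - 1)) powr a" for n
  have "(a + 1) * ((a + 1) / a) powr a = 1 / phi_max a"
    using a by (simp add: phi_max_eq powr_divide)
  moreover have "\<theta> \<longlonglongrightarrow> (a + 1) * ((a + 1) / a) powr a"
    unfolding \<theta>_def using a by (real_asymp simp: field_simps)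
  ultimately have "(\<lambda>n. K * \<theta> n) \<longlonglongrightarrow> K / phi_max a"
    using tendsto_mult_left[of \<theta> "1 / phi_max a" sequentially K] by simp
  moreover obtain q where "K / phi_max a < q" "q < 1"
    using K phi_max_pos[OF a] dense[of "K / phi_max a" 1] by auto
  ultimately have q: "q < 1" "eventually (\<lambda>n. K * \<theta> n < q) sequentially"
    using order_tendstoD(2) by blast+
  moreover have "eventually (\<lambda>n. a * real n > 1) sequentially"
    using a by real_asymp
  ultimately obtain N where N: "\<And>n. n \<ge> N \<Longrightarrow> K * \<theta> n < q \<and> a * real n > 1"
    unfolding eventually_sequentially by (metis (full_types) eventually_conj_iff eventually_sequentially)
  show ?thesis
  proof (rule summable_ratio_test[OF q(1), of N])
    fix n assume "n \<ge> N"
    then have n: "K * \<theta> n < q" "a * real n > 1"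
      using N by auto
    have "fuss_coeff a (Suc n) * K ^ Suc n \<le> fuss_coeff a n * \<theta> n * K ^ Suc n"
      unfolding \<theta>_def using fuss_coeff_Suc_le[OF a n(2)] K by (intro mult_right_mono) auto
    also have "\<dots> = (K * \<theta> n) * (fuss_coeff a n * K ^ n)"
      by (simp add: algebra_simps)
    also have "\<dots> \<le> q * (fuss_coeff a n * K ^ n)"
      using n(1) fuss_coeff_nonneg[OF a, of n] K by (intro mult_right_mono) auto
    finally show "norm (fuss_coeff a (Suc n) * K ^ Suc n) \<le> q * norm (fuss_coeff a n * K ^ n)"
      using fuss_coeff_nonneg[OF a] K by simp
  qed
qed

section \<open>The generating function\<close>

lemma continuous_on_powser_nonneg:
  fixes c :: "nat \<Rightarrow> real"
  assumes c: "\<And>n. c n \<ge> 0" and K: "summable (\<lambda>n. c n * K ^ n)"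
  shows "continuous_on {-K..K} (\<lambda>y. \<Sum>n. c n * y ^ n)"
proof (rule uniform_limit_theorem)
  show "uniform_limit {-K..K} (\<lambda>n y. \<Sum>i<n. c i * y ^ i) (\<lambda>y. \<Sum>n. c n * y ^ n) sequentially"
  proof (rule Weierstrass_m_test[OF _ K])
    fix n and y :: real
    assume "y \<in> {-K..K}"
    then have "c n * \<bar>y\<bar> ^ n \<le> c n * K ^ n"
      using c[of n] by (intro mult_left_mono power_mono) auto
    then show "norm (c n * y ^ n) \<le> c n * K ^ n"
      using c[of n] by (simp add: abs_mult power_abs)
  qed
qed (auto intro!: always_eventually continuous_intros)

lemma sum_convolution_powers:
  fixes f g :: "nat \<Rightarrow> 'a::comm_semiring_1"
  shows "(\<Sum>i\<le>n. (f i * y ^ i) * (g (n - i) * y ^ (n - i))) = (\<Sum>i\<le>n. f i * g (n - i)) * y ^ n"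
  unfolding sum_distrib_right
proof (rule sum.cong[OF refl])
  fix i assume "i \<in> {..n}"
  then have "y ^ i * y ^ (n - i) = y ^ n"
    by (simp flip: power_add)
  then show "(f i * y ^ i) * (g (n - i) * y ^ (n - i)) = f i * g (n - i) * y ^ n"
    by (metis mult.assoc mult.left_commute)
qed

definition fuss_series :: "real \<Rightarrow> real \<Rightarrow> real" where
  "fuss_series a y = (\<Sum>n. fuss_coeff a n * y ^ n)"

definition fuss_series_shift :: "real \<Rightarrow> real \<Rightarrow> real" where
  "fuss_series_shift a y = (\<Sum>n. fuss_coeff a (Suc n) * y ^ n)"

definition fuss_series_deriv :: "real \<Rightarrow> real \<Rightarrow> real" where
  "fuss_series_deriv a y = (\<Sum>n. diffs (fuss_coeff a) n * y ^ n)"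

lemma fuss_series_0: "fuss_series a 0 = 0"
  using powser_zero[of "fuss_coeff a"] by (simp add: fuss_series_def)

context
  fixes a :: real
  assumes a: "a > 0"
begin

lemma summable_norm_fuss_series:
  assumes "\<bar>y\<bar> < phi_max a"
  shows "summable (\<lambda>n. norm (fuss_coeff a n * y ^ n))"
  using summable_fuss_series[OF a abs_ge_zero assms] fuss_coeff_nonneg[OF a]
  by (simp add: abs_mult power_abs)

lemma summable_fuss_series_abs: "\<bar>y\<bar> < phi_max a \<Longrightarrow> summable (\<lambda>n. fuss_coeff a n * y ^ n)"
  by (rule summable_norm_cancel[OF summable_norm_fuss_series])

lemma sums_fuss_series: "\<bar>y\<bar> < phi_max a \<Longrightarrow> (\<lambda>n. fuss_coeff a n * y ^ n) sums fuss_series a y"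
  unfolding fuss_series_def by (rule summable_sums[OF summable_fuss_series_abs])

lemma summable_fuss_series_shift:
  assumes y: "\<bar>y\<bar> < phi_max a"
  shows "summable (\<lambda>n. fuss_coeff a (Suc n) * y ^ n)"
proof (cases "y = 0")
  case True
  then show ?thesis
    by (simp add: summable_0_powser)
next
  case False
  have "summable (\<lambda>n. fuss_coeff a (Suc n) * y ^ Suc n)"
    using summable_fuss_series_abs[OF y] by (subst summable_Suc_iff)
  then have "summable (\<lambda>n. fuss_coeff a (Suc n) * y ^ Suc n / y)"
    by (rule summable_divide)
  then show ?thesis
    using False by simp
qed

lemma sums_fuss_series_shift:
  "\<bar>y\<bar> < phi_max a \<Longrightarrow> (\<lambda>n. fuss_coeff a (Suc n) * y ^ n) sums fuss_series_shift a y"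
  unfolding fuss_series_shift_def by (rule summable_sums[OF summable_fuss_series_shift])

lemma fuss_series_eq_mult_shift:
  assumes y: "\<bar>y\<bar> < phi_max a"
  shows "fuss_series a y = y * fuss_series_shift a y"
proof -
  have "(\<lambda>n. fuss_coeff a (Suc n) * y ^ Suc n) sums fuss_series a y"
    using sums_fuss_series[OF y] by (subst sums_Suc_iff) simp
  moreover have "(\<lambda>n. y * (fuss_coeff a (Suc n) * y ^ n)) sums (y * fuss_series_shift a y)"
    by (rule sums_mult[OF sums_fuss_series_shift[OF y]])
  ultimately show ?thesis
    by (simp add: sums_iff algebra_simps)
qed

lemma DERIV_fuss_series:
  "\<bar>y\<bar> < phi_max a \<Longrightarrow> DERIV (fuss_series a) y :> fuss_series_deriv a y"
  unfolding fuss_series_def fuss_series_deriv_def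
  by (rule termdiffs_strong'[where K = "phi_max a"]) (simp_all add: summable_fuss_series_abs)

lemma isCont_fuss_series_shift: "\<bar>y\<bar> < phi_max a \<Longrightarrow> isCont (fuss_series_shift a) y"
  unfolding fuss_series_shift_def
  by (rule DERIV_isCont[OF termdiffs_strong'[where K = "phi_max a"]])
    (simp_all add: summable_fuss_series_shift)

lemma fuss_series_shift_0: "fuss_series_shift a 0 = 1"
  using powser_zero[of "\<lambda>n. fuss_coeff a (Suc n)"] fuss_coeff_1[OF a]
  by (simp add: fuss_series_shift_def)

lemma fuss_series_shift_ge_1:
  assumes "0 \<le> y" "y < phi_max a"
  shows "fuss_series_shift a y \<ge> 1"
proof -
  have "(\<Sum>n<1. fuss_coeff a (Suc n) * y ^ n) \<le> fuss_series_shift a y"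
    unfolding fuss_series_shift_def using assms fuss_coeff_nonneg[OF a]
    by (intro sum_le_suminf summable_fuss_series_shift) auto
  then show ?thesis
    using fuss_coeff_1[OF a] by simp
qed

lemma fuss_series_mono:
  assumes "0 \<le> s" "s \<le> t" "t < phi_max a"
  shows "fuss_series a s \<le> fuss_series a t"
  unfolding fuss_series_def using assms fuss_coeff_nonneg[OF a]
  by (intro suminf_le summable_fuss_series_abs mult_left_mono power_mono) auto

lemma sums_fuss_series_weighted:
  assumes y: "\<bar>y\<bar> < phi_max a"
  shows "(\<lambda>n. (real n * fuss_coeff a n) * y ^ n) sums (y * fuss_series_deriv a y)"
proof -
  have "(\<lambda>n. diffs (fuss_coeff a) n * y ^ n) sums fuss_series_deriv a y"
    unfolding fuss_series_deriv_def using y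
    by (intro summable_sums termdiff_converges[where K = "phi_max a"] summable_fuss_series_abs) auto
  from sums_mult[OF this, of y]
  have "(\<lambda>n. (real (Suc n) * fuss_coeff a (Suc n)) * y ^ Suc n) sums (y * fuss_series_deriv a y)"
    by (simp add: diffs_def algebra_simps)
  then show ?thesis
    using sums_Suc_iff[of "\<lambda>n. (real n * fuss_coeff a n) * y ^ n"] by simp
qed

lemma sums_fuss_series_square:
  assumes y: "\<bar>y\<bar> < phi_max a"
  shows "(\<lambda>n. fuss_coeff_conv a n * y ^ n) sums (fuss_series a y * fuss_series a y)"
proof -
  from Cauchy_product_sums[OF summable_norm_fuss_series[OF y] summable_norm_fuss_series[OF y]]
  have "(\<lambda>n. \<Sum>i\<le>n. (fuss_coeff a i * y ^ i) * (fuss_coeff a (n - i) * y ^ (n - i)))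
      sums (fuss_series a y * fuss_series a y)"
    using sums_fuss_series[OF y] by (simp add: sums_iff)
  then show ?thesis
    by (simp add: sum_convolution_powers fuss_coeff_conv_def)
qed

lemma sums_fuss_series_weighted_mult:
  assumes y: "\<bar>y\<bar> < phi_max a"
  shows "(\<lambda>n. (real n / 2 * fuss_coeff_conv a n) * y ^ n)
    sums (y * fuss_series_deriv a y * fuss_series a y)"
proof -
  have "summable (\<lambda>n. norm ((real n * fuss_coeff a n) * y ^ n))"
    using sums_fuss_series_weighted[of "\<bar>y\<bar>"] y fuss_coeff_nonneg[OF a]
    by (simp add: sums_iff abs_mult power_abs)
  from Cauchy_product_sums[OF this summable_norm_fuss_series[OF y]]
  have "(\<lambda>n. \<Sum>i\<le>n. ((real i * fuss_coeff a i) * y ^ i) * (fuss_coeff a (n - i) * y ^ (n - i)))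
      sums (y * fuss_series_deriv a y * fuss_series a y)"
    using sums_fuss_series[OF y] sums_fuss_series_weighted[OF y] by (simp add: sums_iff)
  moreover have "(\<Sum>i\<le>n. ((real i * fuss_coeff a i) * y ^ i) * (fuss_coeff a (n - i) * y ^ (n - i)))
      = (real n / 2 * fuss_coeff_conv a n) * y ^ n" for n
    using sum_convolution_powers[where f = "\<lambda>i. real i * fuss_coeff a i" and g = "fuss_coeff a"]
    unfolding fuss_coeff_conv_def sum_convolution_weighted[symmetric] by (simp add: mult.assoc)
  ultimately show ?thesis
    by simp
qed

lemma fuss_series_ode:
  assumes y: "\<bar>y\<bar> < phi_max a"
  shows "y * fuss_series_deriv a y * (1 - (1 + a) * fuss_series a y)
    = fuss_series a y * (1 - fuss_series a y)"
proof -
  define S where "S = fuss_series a y"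
  define S' where "S' = y * fuss_series_deriv a y"
  have "(\<lambda>n. (real n * fuss_coeff a n) * y ^ n - (1 + a) * ((real n / 2 * fuss_coeff_conv a n) * y ^ n))
      sums (S' - (1 + a) * (S' * S))"
    unfolding S_def S'_def
    by (intro sums_diff sums_mult sums_fuss_series_weighted sums_fuss_series_weighted_mult y)
  moreover have "(real n * fuss_coeff a n) * y ^ n - (1 + a) * ((real n / 2 * fuss_coeff_conv a n) * y ^ n)
      = fuss_coeff a n * y ^ n - fuss_coeff_conv a n * y ^ n" for n
  proof -
    have "real n * fuss_coeff a n - (1 + a) * (real n / 2 * fuss_coeff_conv a n)
        = fuss_coeff a n - fuss_coeff_conv a n"
      using fuss_coeff_recurrence[OF a, of n] by (simp add: field_simps)
    from arg_cong[OF this, of "\<lambda>u. u * y ^ n"] show ?thesis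
      by (simp add: algebra_simps)
  qed
  moreover have "(\<lambda>n. fuss_coeff a n * y ^ n - fuss_coeff_conv a n * y ^ n) sums (S - S * S)"
    unfolding S_def by (intro sums_diff sums_fuss_series sums_fuss_series_square y)
  ultimately have "S' - (1 + a) * (S' * S) = S - S * S"
    by (simp add: sums_unique2)
  then show ?thesis
    unfolding S_def S'_def by (simp add: algebra_simps)
qed

(* For t > 0, W t = ln (fuss_series a t / t) + a ln (1 - fuss_series a t), whose derivative vanishes
   by fuss_series_ode; writing it with the shifted series makes W continuous at 0. *)
lemma fuss_series_functional_eq:
  assumes y: "0 < y" "y < phi_max a"
    and below_1: "\<And>t. 0 \<le> t \<Longrightarrow> t \<le> y \<Longrightarrow> fuss_series a t < 1"
  shows "fuss_series a y * (1 - fuss_series a y) powr a = y"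
proof -
  let ?S = "fuss_series a" and ?R = "fuss_series_shift a"
  define W where "W t = ln (?R t) + a * ln (1 - ?S t)" for t
  have R_pos: "?R t > 0" if "0 \<le> t" "t < phi_max a" for t
    using fuss_series_shift_ge_1[OF that] by simp
  have "continuous_on {0..y} W"
  proof (intro continuous_at_imp_continuous_on ballI)
    fix t assume t: "t \<in> {0..y}"
    then have "\<bar>t\<bar> < phi_max a"
      using y by simp
    then show "isCont W t"
      unfolding W_def using t y R_pos[of t] below_1[of t]
      by (intro continuous_intros isCont_fuss_series_shift DERIV_isCont[OF DERIV_fuss_series])
        auto
  qed
  moreover have "DERIV W t :> 0" if t: "0 < t" "t < y" for t
  proof -
    let ?S' = "fuss_series_deriv a t"
    have t_lt: "\<bar>t\<bar> < phi_max a"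
      using t y by simp
    have S_pos: "?S t > 0" and S_lt_1: "?S t < 1"
      using fuss_series_eq_mult_shift[OF t_lt] R_pos[of t] t y below_1[of t] by simp_all
    have "DERIV (\<lambda>u. ln (?S u) - ln u + a * ln (1 - ?S u)) t
        :> ?S' / ?S t - 1 / t + a * (- ?S' / (1 - ?S t))"
      using t S_pos S_lt_1 DERIV_fuss_series[OF t_lt]
      by (auto intro!: derivative_eq_intros)
    moreover have "?S' / ?S t - 1 / t + a * (- ?S' / (1 - ?S t)) = 0"
      using fuss_series_ode[OF t_lt] t S_pos S_lt_1 by (simp add: field_simps)
    ultimately have "DERIV (\<lambda>u. ln (?S u) - ln u + a * ln (1 - ?S u)) t :> 0"
      by simp
    then show ?thesis
    proof (rule has_field_derivative_transform_within_open)
      fix u :: real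
      assume "u \<in> {0<..<phi_max a}"
      then show "ln (?S u) - ln u + a * ln (1 - ?S u) = W u"
        using R_pos[of u] fuss_series_eq_mult_shift[of u] by (simp add: W_def ln_mult_pos)
    qed (use t y in auto)
  qed
  ultimately have "W y = W 0"
    using y(1) by (intro DERIV_isconst_end[of 0 y W]) auto
  also have "W 0 = 0"
    by (simp add: W_def fuss_series_0 fuss_series_shift_0)
  finally have "W y = 0" .
  have y_lt: "\<bar>y\<bar> < phi_max a"
    using y by simp
  have "?S y * (1 - ?S y) powr a = y * exp (W y)"
    using fuss_series_eq_mult_shift[OF y_lt] R_pos[of y] below_1[of y] y
    by (simp add: W_def powr_def exp_add)
  then show ?thesis
    using \<open>W y = 0\<close> by simp
qed

section \<open>Identification with the inverse branch\<close>

(* If 1 - fuss_series a reached xzero a below phi_max a, the functional equation would give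
   phi a (xzero a) = phi_max a there. *)
lemma xzero_less_one_minus_fuss_series:
  assumes y: "0 \<le> y" "y < phi_max a"
  shows "xzero a < 1 - fuss_series a y"
proof (rule ccontr)
  assume "\<not> xzero a < 1 - fuss_series a y"
  moreover have "continuous_on {0..y} (fuss_series a)"
    using continuous_on_powser_nonneg[OF fuss_coeff_nonneg[OF a] summable_fuss_series[OF a y]]
    by (simp add: fuss_series_def continuous_on_subset)
  moreover have "fuss_series a 0 \<le> 1 - xzero a"
    using xzero_bounds[OF a] by (simp add: fuss_series_0)
  ultimately obtain z where z: "0 \<le> z" "z \<le> y" "fuss_series a z = 1 - xzero a"
    using IVT'[of "fuss_series a" 0 "1 - xzero a" y] y by auto
  then have "z > 0"
    using xzero_bounds[OF a] fuss_series_0 by (cases "z = 0") auto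
  moreover have "fuss_series a t < 1" if "0 \<le> t" "t \<le> z" for t
    using fuss_series_mono[of t z] that z y xzero_bounds[OF a] by simp
  ultimately have "fuss_series a z * (1 - fuss_series a z) powr a = z"
    using z y by (intro fuss_series_functional_eq) auto
  then have "z = phi_max a"
    using z xzero_bounds[OF a] by (simp add: phi_max_def phi_eq mult.commute)
  then show False
    using z y by simp
qed

lemma phi_one_minus_fuss_series:
  assumes y: "0 \<le> y" "y < phi_max a"
  shows "phi a (1 - fuss_series a y) = y"
proof -
  have below_1: "fuss_series a t < 1" if "0 \<le> t" "t \<le> y" for t
    using xzero_less_one_minus_fuss_series[of t] that y xzero_bounds[OF a] by simp
  have "fuss_series a y * (1 - fuss_series a y) powr a = y"
  proof (cases "y = 0")
    case True
    then show ?thesis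
      by (simp add: fuss_series_0)
  next
    case False
    then show ?thesis
      using y below_1 by (intro fuss_series_functional_eq) auto
  qed
  then show ?thesis
    using below_1[of y] y by (simp add: phi_eq mult.commute)
qed

lemma summable_fuss_series_phi_max: "summable (\<lambda>n. fuss_coeff a n * phi_max a ^ n)"
proof (rule summableI_nonneg_bounded)
  fix N
  show "(\<Sum>n<N. fuss_coeff a n * phi_max a ^ n) \<le> 1"
  proof (rule tendsto_le[OF trivial_limit_at_left_real tendsto_const])
    show "((\<lambda>y. \<Sum>n<N. fuss_coeff a n * y ^ n) \<longlongrightarrow> (\<Sum>n<N. fuss_coeff a n * phi_max a ^ n))
        (at_left (phi_max a))"
      by (intro tendsto_intros)
    show "eventually (\<lambda>y. (\<Sum>n<N. fuss_coeff a n * y ^ n) \<le> 1) (at_left (phi_max a))"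
      using eventually_at_left_real[OF phi_max_pos[OF a]]
    proof eventually_elim
      case (elim y)
      then have "(\<Sum>n<N. fuss_coeff a n * y ^ n) \<le> fuss_series a y"
        unfolding fuss_series_def using fuss_coeff_nonneg[OF a]
        by (intro sum_le_suminf summable_fuss_series[OF a]) auto
      also have "\<dots> < 1"
        using elim xzero_less_one_minus_fuss_series[of y] xzero_bounds[OF a] by simp
      finally show ?case
        by simp
    qed
  qed
qed (use fuss_coeff_nonneg[OF a] phi_max_pos[OF a] in simp)

lemma summable_fuss_series_upto_phi_max:
  assumes "0 \<le> y" "y \<le> phi_max a"
  shows "summable (\<lambda>n. fuss_coeff a n * y ^ n)"
  using assms fuss_coeff_nonneg[OF a]
  by (intro summable_comparison_test'[OF summable_fuss_series_phi_max, of 0])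
    (simp add: abs_mult power_abs mult_left_mono power_mono)

lemma fuss_series_nonneg: "0 \<le> y \<Longrightarrow> y \<le> phi_max a \<Longrightarrow> fuss_series a y \<ge> 0"
  unfolding fuss_series_def using fuss_coeff_nonneg[OF a]
  by (intro suminf_nonneg summable_fuss_series_upto_phi_max) auto

(* By uniform convergence on [0, phi_max a], both facts extend to the boundary point. *)
lemma fuss_series_at_phi_max:
  "xzero a \<le> 1 - fuss_series a (phi_max a) \<and> phi a (1 - fuss_series a (phi_max a)) = phi_max a"
proof -
  let ?S = "fuss_series a" and ?m = "phi_max a"
  have "continuous_on {0..?m} ?S"
    using continuous_on_powser_nonneg[OF fuss_coeff_nonneg[OF a] summable_fuss_series_phi_max]
    by (simp add: fuss_series_def continuous_on_subset)
  then have lim: "((\<lambda>y. 1 - ?S y) \<longlongrightarrow> 1 - ?S ?m) (at_left ?m)"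
    using phi_max_pos[OF a] by (intro tendsto_intros continuous_on_Icc_at_leftD)
  have ev: "eventually (\<lambda>y. 0 < y \<and> y < ?m) (at_left ?m)"
    using eventually_at_left_real[OF phi_max_pos[OF a]] by simp
  have lower: "xzero a \<le> 1 - ?S ?m"
    using ev by (intro tendsto_lowerbound[OF lim] trivial_limit_at_left_real)
      (auto elim!: eventually_mono intro: less_imp_le xzero_less_one_minus_fuss_series)
  have "((\<lambda>y. phi a (1 - ?S y)) \<longlongrightarrow> phi a (1 - ?S ?m)) (at_left ?m)"
  proof (rule continuous_on_tendsto_compose[OF continuous_on_phi[OF a] lim])
    show "1 - ?S ?m \<in> {0..1}"
      using lower xzero_bounds[OF a] fuss_series_nonneg[of ?m] phi_max_pos[OF a] by simp
    show "eventually (\<lambda>y. 1 - ?S y \<in> {0..1}) (at_left ?m)"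
      using ev
    proof eventually_elim
      case (elim y)
      then show ?case
        using fuss_series_nonneg[of y] xzero_less_one_minus_fuss_series[of y] xzero_bounds[OF a]
        by simp
    qed
  qed
  moreover have "((\<lambda>y. phi a (1 - ?S y)) \<longlongrightarrow> ?m) (at_left ?m)"
    using ev by (intro Lim_transform_eventually[OF tendsto_ident_at])
      (auto elim!: eventually_mono simp: phi_one_minus_fuss_series)
  ultimately show ?thesis
    using lower tendsto_unique[OF trivial_limit_at_left_real] by blast
qed

lemma rinv_eq_one_minus_fuss_series:
  assumes y: "0 \<le> y" "y \<le> phi_max a"
  shows "rinv a y = 1 - fuss_series a y"
proof (cases "y = phi_max a")
  case True
  then show ?thesis
    using fuss_series_at_phi_max fuss_series_nonneg y by (intro rinv_eqI[OF a]) auto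
next
  case False
  then have "y < phi_max a"
    using y by simp
  then show ?thesis
    using xzero_less_one_minus_fuss_series fuss_series_nonneg phi_one_minus_fuss_series y
    by (intro rinv_eqI[OF a]) (auto intro: less_imp_le)
qed

end

theorem proposition2:
  fixes a x :: real
  assumes "a > 0" and "0 \<le> x" and "x \<le> 1"
  shows "summable (\<lambda>n. \<bar>term_a a x (Suc n)\<bar>)
    \<and> 1 - (\<Sum>n. term_a a x (Suc n)) = g_fun a x
    \<and> (x \<le> xzero a \<longrightarrow> 1 - (\<Sum>n. term_a a x (Suc n)) = f_fun a x)
    \<and> (xzero a \<le> x \<longrightarrow> 1 - (\<Sum>n. term_a a x (Suc n)) = x)"
proof -
  define y where "y = phi a x"
  have y: "0 \<le> y" "y \<le> phi_max a"
    unfolding y_def using assms by (simp_all add: phi_nonneg phi_le_phi_max)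
  have term_eq: "term_a a x (Suc n) = fuss_coeff a (Suc n) * y ^ Suc n" for n
    unfolding term_a_def fuss_coeff_def y_def using assms(2) by (simp add: phi_eq)
  have "(\<lambda>n. fuss_coeff a n * y ^ n) sums fuss_series a y"
    unfolding fuss_series_def
    by (rule summable_sums[OF summable_fuss_series_upto_phi_max[OF assms(1) y]])
  then have sums: "(\<lambda>n. term_a a x (Suc n)) sums fuss_series a y"
    unfolding term_eq by (subst sums_Suc_iff) simp
  have "\<bar>term_a a x (Suc n)\<bar> = term_a a x (Suc n)" for n
    unfolding term_eq using fuss_coeff_nonneg[OF assms(1)] y by simp
  then have "summable (\<lambda>n. \<bar>term_a a x (Suc n)\<bar>)"
    using sums_summable[OF sums] by simp
  moreover have "1 - (\<Sum>n. term_a a x (Suc n)) = g_fun a x"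
    using sums rinv_eq_one_minus_fuss_series[OF assms(1) y] by (simp add: sums_iff g_fun_def y_def)
  moreover have "g_fun a x = x" if "xzero a \<le> x"
    unfolding g_fun_def using rinv_eqI[OF assms(1) that assms(3) refl] .
  ultimately show ?thesis
    by (simp add: f_fun_def g_fun_def)
qed

end
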